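(* In the 3-body problem in ${\bf H}^2$ with masses $m_1,m_2,m_3>0$, let ${\bf q}_i(t)=(\rho_i\cos(\omega t+\alpha_i),\rho_i\sin(\omega t+\alpha_i), z_i)$, $i=1,2,3$, with constants $\omega\ne0$, $\alpha_i$, $\rho_i\ge0$, $z_i=(\rho_i^2+1)^{1/2}$, be an elliptic relative equilibrium in which the three bodies form an equilateral triangle (all mutual hyperbolic distances equal) at all times. Then $z_1=z_2=z_3$, i.e. the bodies move on the same circle whose plane is orthogonal to the rotation axis, and $m_1=m_2=m_3$.
   Context: The $n$-body problem in ${\bf H}^2$ (Weierstrass model): with the Lorentz inner product ${\bf a}\boxdot{\bf b}=a_xb_x+a_yb_y-a_zb_z$ on $\mathbb R^3$, ${\bf H}^2=\{(x,y,z): x^2+y^2-z^2=-1,\ z>0\}$. Bodies of masses $m_1,\dots,m_n>0$ have positions ${\bf q}_i=(x_i,y_i,z_i)\in{\bf H}^2$ and satisfy $$\ddot{\bf q}_i=\sum_{j\ne i}\frac{m_j[{\bf q}_j+({\bf q}_i\boxdot{\bf q}_j){\bf q}_i]}{[({\bf q}_i\boxdot{\bf q}_j)^2-1]^{3/2}}+(\dot{\bf q}_i\boxdot\dot{\bf q}_i){\bf q}_i,\qquad {\bf q}_i\boxdot{\bf q}_i=-1,\ \ {\bf q}_i\boxdot\dot{\bf q}_i=0,$$ $i=1,\dots,n$, defined only for collisionless configurations. The angular momentum $\sum_i m_i{\bf q}_i\boxtimes\dot{\bf q}_i$, where ${\bf a}\boxtimes{\bf b}=(a_yb_z-a_zb_y,\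 a_zb_x-a_xb_z,\ a_yb_x-a_xb_y)$, is a first integral. The hyperbolic distance is $d({\bf a},{\bf b})=\cosh^{-1}(-{\bf a}\boxdot{\bf b})$. An elliptic relative equilibrium in ${\bf H}^2$ is a solution with $x_i=\rho_i\cos(\omega t+\alpha_i)$, $y_i=\rho_i\sin(\omega t+\alpha_i)$, $z_i=(\rho_i^2+1)^{1/2}$, constants $\omega,\alpha_i,\rho_i$. *)

theory Defs
  imports "HOL-Analysis.Analysis"
begin

text \<open>Points of R^3 are vectors of type real^3; components 1,2,3 are x,y,z.\<close>

definition lorentz :: "real^3 \<Rightarrow> real^3 \<Rightarrow> real" where
  "lorentz a b = a$1 * b$1 + a$2 * b$2 - a$3 * b$3"

definition H2 :: "(real^3) set" where
  "H2 = {p. p$1^2 + p$2^2 - p$3^2 = -1 \<and> p$3 > 0}"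

definition hdist :: "real^3 \<Rightarrow> real^3 \<Rightarrow> real" where
  "hdist a b = arcosh (- lorentz a b)"

definition accel :: "nat \<Rightarrow> (nat \<Rightarrow> real) \<Rightarrow> (nat \<Rightarrow> real^3) \<Rightarrow> real^3 \<Rightarrow> nat \<Rightarrow> real^3" where
  "accel n m p w i =
     (\<Sum>j\<in>{..<n} - {i}.
        (m j / ((lorentz (p i) (p j))^2 - 1) powr (3/2)) *\<^sub>R (p j + lorentz (p i) (p j) *\<^sub>R p i))
     + lorentz w w *\<^sub>R p i"

definition is_solution :: "nat \<Rightarrow> (nat \<Rightarrow> real) \<Rightarrow> (nat \<Rightarrow> real \<Rightarrow> real^3) \<Rightarrow> bool" where
  "is_solution n m q \<longleftrightarrow>
     (\<exists>v :: nat \<Rightarrow> real \<Rightarrow> real^3. \<forall>t.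
        (\<forall>i<n. \<forall>j<n. i \<noteq> j \<longrightarrow> q i t \<noteq> q j t) \<and>
        (\<forall>i<n. q i t \<in> H2 \<and> lorentz (q i t) (q i t) = -1 \<and> lorentz (q i t) (v i t) = 0 \<and>
            (q i has_vector_derivative v i t) (at t) \<and>
            (v i has_vector_derivative accel n m (\<lambda>k. q k t) (v i t) i) (at t)))"

definition elliptic_RE :: "nat \<Rightarrow> (nat \<Rightarrow> real \<Rightarrow> real^3) \<Rightarrow> real \<Rightarrow> (nat \<Rightarrow> real) \<Rightarrow> (nat \<Rightarrow> real) \<Rightarrow> bool" where
  "elliptic_RE n q \<omega> \<alpha> \<rho> \<longleftrightarrow>
     (\<forall>i<n. \<forall>t. q i t = vector [\<rho> i * cos (\<omega> * t + \<alpha> i), \<rho> i * sin (\<omega> * t + \<alpha> i), sqrt ((\<rho> i)^2 + 1)])"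

end

theory Submission
  imports Defs
begin

(* Fix a time t and write P_i = q_i(t).  Since the triangle is equilateral, all
   mutual Lorentz products equal one number c, and c < -1 because the bodies are distinct points
   of H^2.  With weights K_j = m_j / (c^2 - 1)^(3/2) and S = sum_j K_j P_j, the equation of motion
   of body i collapses to  S - b_i P_i = (acceleration of body i)  for a scalar b_i.  For a
   uniform rotation the acceleration is -omega^2 times the horizontal part of P_i, so
   horizontally S = (b_i - omega^2) P_i, and vertically S_z = b_i z_i.  An equilateral triangle
   in H^2 does not lie in a vertical plane through the origin, i.e. its horizontal projections are
   not collinear with the origin (a Gram determinant computation); this forces b_i = omega^2 for
   every i.  Hence all
   heights z_i = S_z / omega^2 agree, and then comparing the b_i gives equal weights K_i, that is,
   equal masses. *)

lemma less_3_iff: "(i::nat) < 3 \<longleftrightarrow> i = 0 \<or> i = 1 \<or> i = 2"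
  by auto

lemma all_less_3: "(\<forall>i<3. P i) \<longleftrightarrow> P 0 \<and> P 1 \<and> P (2::nat)"
  by (auto simp: less_3_iff)

lemma ex_less_3: "(\<exists>i<3. P i) \<longleftrightarrow> P 0 \<or> P 1 \<or> P (2::nat)"
  by (auto simp: less_3_iff)

lemma sum_lessThan_3: "(\<Sum>j<3. f j) = f 0 + f 1 + f (2::nat)"
  by (simp add: numeral_3_eq_3 numeral_2_eq_2 add.commute add.left_commute)

lemma lorentz_commute: "lorentz a b = lorentz b a"
  by (simp add: lorentz_def mult.commute)

lemma lorentz_self_H2: "p \<in> H2 \<Longrightarrow> lorentz p p = -1"
  by (simp add: H2_def lorentz_def power2_eq_square)

lemma H2_height_ge_1:
  assumes "p \<in> H2" shows "p$3 \<ge> 1"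
proof -
  have "(p$3)\<^sup>2 = (p$1)\<^sup>2 + (p$2)\<^sup>2 + 1" "p$3 \<ge> 0"
    using assms by (auto simp: H2_def)
  then have "1\<^sup>2 \<le> (p$3)\<^sup>2" "p$3 \<ge> 0"
    using zero_le_power2 [of "p$1"] zero_le_power2 [of "p$2"] by auto
  then show ?thesis
    by (rule power2_le_imp_le)
qed

lemma H2_lorentz_le:
  assumes p: "p \<in> H2" and q: "q \<in> H2"
  shows "lorentz p q \<le> -1" and "lorentz p q = -1 \<Longrightarrow> p = q"
proof -
  define h where "h = p$1 * q$1 + p$2 * q$2"
  have rp: "(p$1)\<^sup>2 + (p$2)\<^sup>2 = (p$3)\<^sup>2 - 1" and rq: "(q$1)\<^sup>2 + (q$2)\<^sup>2 = (q$3)\<^sup>2 - 1"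
    using p q by (simp_all add: H2_def)
  have lagrange: "h\<^sup>2 + (p$1 * q$2 - p$2 * q$1)\<^sup>2 = ((p$3)\<^sup>2 - 1) * ((q$3)\<^sup>2 - 1)"
    unfolding h_def rp [symmetric] rq [symmetric] by algebra
  have gap: "(p$3 * q$3 - 1)\<^sup>2 - ((p$3)\<^sup>2 - 1) * ((q$3)\<^sup>2 - 1) = (p$3 - q$3)\<^sup>2"
    by algebra
  have "1 \<le> p$3 * q$3"
    using H2_height_ge_1 [OF p] H2_height_ge_1 [OF q] by (metis mult_mono' mult_1 zero_le_one)
  moreover have "h\<^sup>2 \<le> (p$3 * q$3 - 1)\<^sup>2"
    using lagrange gap by (smt (verit) zero_le_power2)
  ultimately have "h \<le> p$3 * q$3 - 1"
    by (simp add: power2_le_iff_abs_le)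
  then show "lorentz p q \<le> -1"
    by (simp add: lorentz_def h_def)
  assume "lorentz p q = -1"
  then have h_eq: "h = p$3 * q$3 - 1"
    by (simp add: lorentz_def h_def)
  then have "(p$3 - q$3)\<^sup>2 \<le> 0"
    using lagrange gap by (smt (verit) zero_le_power2)
  then have z: "p$3 = q$3"
    by simp
  have "(p$1 - q$1)\<^sup>2 + (p$2 - q$2)\<^sup>2 = ((p$3)\<^sup>2 - 1) + ((q$3)\<^sup>2 - 1) - 2 * h"
    unfolding h_def rp [symmetric] rq [symmetric] by algebra
  also have "\<dots> = 0"
    using h_eq z by (simp add: power2_eq_square)
  finally have "p$1 = q$1" "p$2 = q$2"
    by (simp_all add: sum_power2_eq_zero_iff)
  with z show "p = q"
    by (simp add: vec_eq_iff forall_3)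
qed

text \<open>Since arcosh is injective on [1, oo), equal hyperbolic distances mean equal Lorentz products.\<close>

lemma hdist_eq_imp_lorentz_eq:
  assumes "p \<in> H2" "q \<in> H2" "r \<in> H2" "s \<in> H2" and "hdist p q = hdist r s"
  shows "lorentz p q = lorentz r s"
proof -
  have "1 \<le> - lorentz p q" "1 \<le> - lorentz r s"
    using H2_lorentz_le(1) assms(1-4) by force+
  then have "- lorentz p q = - lorentz r s"
    using arg_cong [OF assms(5) [unfolded hdist_def], of cosh] by (simp add: cosh_arcosh_real)
  then show ?thesis
    by simp
qed

lemma equilateral_lorentz_products:
  fixes P :: "nat \<Rightarrow> real^3"
  assumes H2: "\<forall>i<3. P i \<in> H2"
    and distinct: "\<forall>i<3. \<forall>j<3. i \<noteq> j \<longrightarrow> P i \<noteq> P j"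
    and equilateral: "hdist (P 0) (P 1) = hdist (P 1) (P 2) \<and> hdist (P 1) (P 2) = hdist (P 0) (P 2)"
  obtains c where "\<forall>i<3. \<forall>j<3. i \<noteq> j \<longrightarrow> lorentz (P i) (P j) = c" and "c < -1"
proof
  define c where "c = lorentz (P 0) (P 1)"
  have H2': "P 0 \<in> H2" "P 1 \<in> H2" "P 2 \<in> H2"
    using H2 by simp_all
  have "lorentz (P 1) (P 2) = c" "lorentz (P 0) (P 2) = c"
    using equilateral hdist_eq_imp_lorentz_eq [OF H2'(1,2)] hdist_eq_imp_lorentz_eq [OF H2'(2,3)]
      H2' unfolding c_def by metis+
  then show "\<forall>i<3. \<forall>j<3. i \<noteq> j \<longrightarrow> lorentz (P i) (P j) = c"
    by (simp add: all_less_3 c_def lorentz_commute)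
  have "P 0 \<noteq> P 1" "P 0 \<in> H2" "P 1 \<in> H2"
    using distinct H2 by auto
  then show "c < -1"
    unfolding c_def using H2_lorentz_le by fastforce
qed

text \<open>The Gram determinant of the Lorentz products of three vectors equals minus the square of their
  ordinary determinant (the Lorentz form has determinant -1).  The determinant is expanded along
  the third coordinate, so it vanishes as soon as all horizontal 2x2 minors vanish.\<close>

lemma lorentz_gram_det:
  fixes a b c :: "real^3"
  shows "lorentz a a * lorentz b b * lorentz c c + 2 * lorentz a b * lorentz b c * lorentz a c
           - lorentz a a * (lorentz b c)\<^sup>2 - lorentz b b * (lorentz a c)\<^sup>2 - lorentz c c * (lorentz a b)\<^sup>2
         = - (a$3 * (b$1 * c$2 - c$1 * b$2) - b$3 * (a$1 * c$2 - c$1 * a$2) + c$3 * (a$1 * b$2 - b$1 * a$2))\<^sup>2"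
  unfolding lorentz_def by (simp add: algebra_simps power2_eq_square)

text \<open>An equilateral triangle in H2 does not lie in a vertical plane through the origin (that is,
  on a geodesic through the bottom point (0, 0, 1)): its horizontal projections are not collinear
  with the origin.  Otherwise its Gram determinant (c + 1)^2 (2c - 1) would vanish, which is
  impossible for c < -1.\<close>

lemma equilateral_not_collinear:
  fixes P :: "nat \<Rightarrow> real^3"
  assumes H2: "\<forall>i<3. P i \<in> H2"
    and products: "\<forall>i<3. \<forall>j<3. i \<noteq> j \<longrightarrow> lorentz (P i) (P j) = c" and "c < -1"
  shows "\<exists>i<3. \<exists>j<3. (P i)$1 * (P j)$2 \<noteq> (P j)$1 * (P i)$2"
proof (rule ccontr)
  assume "\<not> ?thesis"
  then have "P 1$1 * P 2$2 - P 2$1 * P 1$2 = 0" "P 0$1 * P 2$2 - P 2$1 * P 0$2 = 0"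
    "P 0$1 * P 1$2 - P 1$1 * P 0$2 = 0"
    by (auto simp: ex_less_3)
  moreover have "lorentz (P i) (P i) = -1" if "i < 3" for i
    using H2 that lorentz_self_H2 by blast
  ultimately have "(-1) * (-1) * (-1) + 2 * c * c * c - (-1) * c\<^sup>2 - (-1) * c\<^sup>2 - (-1) * c\<^sup>2 = (0::real)"
    using lorentz_gram_det [of "P 0" "P 1" "P 2"] products by (simp add: all_less_3)
  then have "(c + 1)\<^sup>2 * (2 * c - 1) = 0"
    by (simp add: power2_eq_square algebra_simps)
  moreover have "(c + 1)\<^sup>2 * (2 * c - 1) < 0"
    using \<open>c < -1\<close> by (intro mult_pos_neg) auto
  ultimately show False
    by linarith
qed

lemma accel_equal_products:
  fixes P :: "nat \<Rightarrow> real^3" and m :: "nat \<Rightarrow> real"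
  assumes "i < n" and products: "\<forall>j<n. j \<noteq> i \<longrightarrow> lorentz (P i) (P j) = c"
  defines "K \<equiv> \<lambda>j. m j / (c\<^sup>2 - 1) powr (3/2)"
  shows "accel n m P w i =
           (\<Sum>j<n. K j *\<^sub>R P j) - ((1 + c) * K i - c * (\<Sum>j<n. K j) - lorentz w w) *\<^sub>R P i"
proof -
  define R where "R = {..<n} - {i}"
  have "accel n m P w i = (\<Sum>j\<in>R. K j *\<^sub>R (P j + c *\<^sub>R P i)) + lorentz w w *\<^sub>R P i"
    unfolding accel_def R_def K_def using products by (intro arg_cong2 [where f = "(+)"] sum.cong) auto
  also have "\<dots> = (\<Sum>j\<in>R. K j *\<^sub>R P j) + (c * (\<Sum>j\<in>R. K j) + lorentz w w) *\<^sub>R P i"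
    by (simp add: scaleR_add_right sum.distrib scaleR_sum_left sum_distrib_left algebra_simps)
  moreover have "(\<Sum>j<n. K j *\<^sub>R P j) = K i *\<^sub>R P i + (\<Sum>j\<in>R. K j *\<^sub>R P j)"
    and "(\<Sum>j<n. K j) = K i + (\<Sum>j\<in>R. K j)"
    unfolding R_def using \<open>i < n\<close> by (simp_all add: sum.remove)
  ultimately show ?thesis
    by (simp add: algebra_simps)
qed

lemma balanced_with_origin_collinear:
  fixes x y K :: "nat \<Rightarrow> real"
  assumes K: "\<forall>i<3. K i > 0"
    and Sx: "(\<Sum>j<3. K j * x j) = 0" and Sy: "(\<Sum>j<3. K j * y j) = 0"
    and "i < 3" and "x i = 0" and "y i = 0"
  shows "\<forall>a<3. \<forall>b<3. x a * y b = x b * y a"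
proof -
  have pair: "x a * y b = x b * y a"
    if "K a * x a + K b * x b = 0" "K a * y a + K b * y b = 0" "K a > 0" for a b
  proof -
    have "K a * (x a * y b - x b * y a) = y b * (K a * x a + K b * x b) - x b * (K a * y a + K b * y b)"
      by algebra
    then show ?thesis
      using that by simp
  qed
  have "x 1 * y 2 = x 2 * y 1 \<and> x 0 * y 2 = x 2 * y 0 \<and> x 0 * y 1 = x 1 * y 0"
    using \<open>i < 3\<close> unfolding less_3_iff
  proof (elim disjE)
    assume "i = 0"
    then show ?thesis
      using \<open>x i = 0\<close> \<open>y i = 0\<close> Sx Sy K pair [of 1 2] by (simp add: sum_lessThan_3)
  next
    assume "i = 1"
    then show ?thesis
      using \<open>x i = 0\<close> \<open>y i = 0\<close> Sx Sy K pair [of 0 2] by (simp add: sum_lessThan_3)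
  next
    assume "i = 2"
    then show ?thesis
      using \<open>x i = 0\<close> \<open>y i = 0\<close> Sx Sy K pair [of 0 1] by (simp add: sum_lessThan_3)
  qed
  then show ?thesis
    by (auto simp: all_less_3)
qed

text \<open>Suppose the positive combination S of three plane vectors p_i satisfies
  S = beta_i p_i for every i, and the p_i are not collinear with the origin.  Then every beta_i
  vanishes: two nonzero beta would make the corresponding p_i parallel to S, so some beta_k = 0,
  whence S = 0, and a nonzero beta_i would force p_i = 0, contradicting non-collinearity.\<close>

lemma balanced_forces_vanish:
  fixes x y K \<beta> :: "nat \<Rightarrow> real"
  assumes noncollinear: "\<exists>i<3. \<exists>j<3. x i * y j \<noteq> x j * y i"
    and K: "\<forall>i<3. K i > 0"
    and Sx: "\<forall>i<3. (\<Sum>j<3. K j * x j) = \<beta> i * x i"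
    and Sy: "\<forall>i<3. (\<Sum>j<3. K j * y j) = \<beta> i * y i"
  shows "\<forall>i<3. \<beta> i = 0"
proof -
  define X Y where "X = (\<Sum>j<3. K j * x j)" and "Y = (\<Sum>j<3. K j * y j)"
  have X: "\<beta> i * x i = X" and Y: "\<beta> i * y i = Y" if "i < 3" for i
    unfolding X_def Y_def using Sx [rule_format, OF that] Sy [rule_format, OF that] by simp_all
  have minor: "\<beta> i * \<beta> j * (x i * y j - x j * y i) = 0" if "i < 3" "j < 3" for i j
  proof -
    have "\<beta> i * \<beta> j * (x i * y j - x j * y i) = (\<beta> i * x i) * (\<beta> j * y j) - (\<beta> j * x j) * (\<beta> i * y i)"
      by (simp add: algebra_simps)
    also have "\<dots> = 0"
      using that by (simp add: X Y)
    finally show ?thesis .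
  qed
  obtain k where "k < 3" "\<beta> k = 0"
  proof -
    obtain i j where ij: "i < 3" "j < 3" "x i * y j \<noteq> x j * y i"
      using noncollinear by blast
    then have "\<beta> i = 0 \<or> \<beta> j = 0"
      using minor [OF ij(1,2)] by simp
    then show ?thesis
      using that ij by blast
  qed
  then have "X = 0" "Y = 0"
    using X [of k] Y [of k] by simp_all
  show ?thesis
  proof (intro allI impI, rule ccontr)
    fix i assume "i < 3" "\<beta> i \<noteq> 0"
    then have "x i = 0" "y i = 0"
      using X [of i] Y [of i] \<open>X = 0\<close> \<open>Y = 0\<close> by simp_all
    then show False
      using balanced_with_origin_collinear [OF K _ _ \<open>i < 3\<close>] \<open>X = 0\<close> \<open>Y = 0\<close> noncollinear
      unfolding X_def Y_def by blast
  qed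
qed

lemma has_vector_derivative_component:
  fixes f :: "real \<Rightarrow> real^'n"
  assumes "(f has_vector_derivative f') (at t)"
  shows "((\<lambda>s. f s $ k) has_real_derivative f' $ k) (at t)"
  using bounded_linear.has_vector_derivative [OF bounded_linear_vec_nth assms]
  by (simp add: has_real_derivative_iff_has_vector_derivative)

lemma circular_motion_kinematics:
  fixes f v :: "real \<Rightarrow> real^3" and A :: "real^3"
  assumes f: "\<And>s. f s = vector [r * cos (\<omega> * s + a), r * sin (\<omega> * s + a), h]"
    and fv: "\<And>s. (f has_vector_derivative v s) (at s)"
    and vA: "(v has_vector_derivative A) (at t)"
  shows "lorentz (v t) (v t) = \<omega>\<^sup>2 * ((f t$1)\<^sup>2 + (f t$2)\<^sup>2)"
    and "A = vector [- \<omega>\<^sup>2 * f t$1, - \<omega>\<^sup>2 * f t$2, 0]"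
proof -
  have d_cos: "((\<lambda>s. c * cos (\<omega> * s + a)) has_real_derivative - c * \<omega> * sin (\<omega> * s + a)) (at s)"
    and d_sin: "((\<lambda>s. c * sin (\<omega> * s + a)) has_real_derivative c * \<omega> * cos (\<omega> * s + a)) (at s)"
    for c s by (auto intro!: derivative_eq_intros)
  have "(\<lambda>s. f s $ 1) = (\<lambda>s. r * cos (\<omega> * s + a))" "(\<lambda>s. f s $ 2) = (\<lambda>s. r * sin (\<omega> * s + a))"
    "(\<lambda>s. f s $ 3) = (\<lambda>s. h)"
    by (simp_all add: f)
  then have v1: "v s $ 1 = - r * \<omega> * sin (\<omega> * s + a)"
    and v2: "v s $ 2 = r * \<omega> * cos (\<omega> * s + a)"
    and v3: "v s $ 3 = 0" for s
    using has_vector_derivative_component [OF fv [of s]] d_cos d_sin DERIV_const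
    by (metis DERIV_unique)+
  show "lorentz (v t) (v t) = \<omega>\<^sup>2 * ((f t$1)\<^sup>2 + (f t$2)\<^sup>2)"
  proof -
    have "lorentz (v t) (v t) = (r * \<omega> * sin (\<omega> * t + a))\<^sup>2 + (r * \<omega> * cos (\<omega> * t + a))\<^sup>2"
      by (simp add: lorentz_def v1 v2 v3 power2_eq_square)
    also have "\<dots> = \<omega>\<^sup>2 * ((r * cos (\<omega> * t + a))\<^sup>2 + (r * sin (\<omega> * t + a))\<^sup>2)"
      by (simp add: power_mult_distrib algebra_simps)
    also have "\<dots> = \<omega>\<^sup>2 * ((f t$1)\<^sup>2 + (f t$2)\<^sup>2)"
      by (simp add: f)
    finally show ?thesis .
  qed
  have "((\<lambda>s. (- r * \<omega>) * sin (\<omega> * s + a)) has_real_derivative A $ 1) (at t)"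
    "((\<lambda>s. (r * \<omega>) * cos (\<omega> * s + a)) has_real_derivative A $ 2) (at t)"
    "((\<lambda>s. 0) has_real_derivative A $ 3) (at t)"
    using has_vector_derivative_component [OF vA, of 1] has_vector_derivative_component [OF vA, of 2]
      has_vector_derivative_component [OF vA, of 3] by (simp_all add: v1 v2 v3)
  then have "A $ 1 = (- r * \<omega>) * \<omega> * cos (\<omega> * t + a)"
    "A $ 2 = - (r * \<omega>) * \<omega> * sin (\<omega> * t + a)" "A $ 3 = 0"
    using d_sin d_cos DERIV_const DERIV_unique by blast+
  then have "A $ 1 = - \<omega>\<^sup>2 * f t$1" "A $ 2 = - \<omega>\<^sup>2 * f t$2" "A $ 3 = 0"
    by (simp_all add: f power2_eq_square)
  then show "A = vector [- \<omega>\<^sup>2 * f t$1, - \<omega>\<^sup>2 * f t$2, 0]"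
    by (simp add: vec_eq_iff forall_3)
qed

lemma rotating_equal_products_balance:
  fixes m K b :: "nat \<Rightarrow> real" and P w :: "nat \<Rightarrow> real^3" and W c :: real
  assumes products: "\<forall>i<3. \<forall>j<3. i \<noteq> j \<longrightarrow> lorentz (P i) (P j) = c"
    and speed: "\<forall>i<3. lorentz (w i) (w i) = W * ((P i$1)\<^sup>2 + (P i$2)\<^sup>2)"
    and motion: "\<forall>i<3. accel 3 m P (w i) i = vector [- W * P i$1, - W * P i$2, 0]"
    and K_def: "K = (\<lambda>j. m j / (c\<^sup>2 - 1) powr (3/2))"
    and b_def: "b = (\<lambda>i. (1 + c) * K i - c * (\<Sum>j<3. K j) - W * ((P i$1)\<^sup>2 + (P i$2)\<^sup>2))"
    and "i < 3"
  shows "(\<Sum>j<3. K j * P j$1) = (b i - W) * P i$1"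
    and "(\<Sum>j<3. K j * P j$2) = (b i - W) * P i$2"
    and "(\<Sum>j<3. K j * P j$3) = b i * P i$3"
proof -
  define S where "S = (\<Sum>j<3. K j *\<^sub>R P j)"
  have "\<forall>j<3. j \<noteq> i \<longrightarrow> lorentz (P i) (P j) = c"
    using products \<open>i < 3\<close> by blast
  then have "accel 3 m P (w i) i = S - b i *\<^sub>R P i"
    using accel_equal_products [of i 3 P c m "w i"] speed \<open>i < 3\<close> unfolding S_def b_def K_def
    by simp
  then have "S = b i *\<^sub>R P i + vector [- W * P i$1, - W * P i$2, 0]"
    using motion \<open>i < 3\<close> by (simp add: algebra_simps)
  then have "S$1 = (b i - W) * P i$1" "S$2 = (b i - W) * P i$2" "S$3 = b i * P i$3"
    by (simp_all add: algebra_simps)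
  then show "(\<Sum>j<3. K j * P j$1) = (b i - W) * P i$1"
    and "(\<Sum>j<3. K j * P j$2) = (b i - W) * P i$2"
    and "(\<Sum>j<3. K j * P j$3) = b i * P i$3"
    by (simp_all add: S_def)
qed

lemma equilateral_relative_equilibrium_configuration:
  fixes m :: "nat \<Rightarrow> real" and P w :: "nat \<Rightarrow> real^3" and W :: real
  assumes masses: "\<forall>i<3. m i > 0" and "W > 0"
    and H2: "\<forall>i<3. P i \<in> H2"
    and distinct: "\<forall>i<3. \<forall>j<3. i \<noteq> j \<longrightarrow> P i \<noteq> P j"
    and equilateral: "hdist (P 0) (P 1) = hdist (P 1) (P 2) \<and> hdist (P 1) (P 2) = hdist (P 0) (P 2)"
    and speed: "\<forall>i<3. lorentz (w i) (w i) = W * ((P i$1)\<^sup>2 + (P i$2)\<^sup>2)"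
    and motion: "\<forall>i<3. accel 3 m P (w i) i = vector [- W * P i$1, - W * P i$2, 0]"
  shows "P 0$3 = P 1$3 \<and> P 1$3 = P 2$3 \<and> m 0 = m 1 \<and> m 1 = m 2"
proof -
  obtain c where products: "\<forall>i<3. \<forall>j<3. i \<noteq> j \<longrightarrow> lorentz (P i) (P j) = c" and "c < -1"
    using equilateral_lorentz_products [OF H2 distinct equilateral] by blast
  define K where "K = (\<lambda>j. m j / (c\<^sup>2 - 1) powr (3/2))"
  define b where "b = (\<lambda>i. (1 + c) * K i - c * (\<Sum>j<3. K j) - W * ((P i$1)\<^sup>2 + (P i$2)\<^sup>2))"
  define Z where "Z = (\<Sum>j<3. K j * P j$3)"
  note balance = rotating_equal_products_balance [OF products speed motion K_def b_def]
  have "1 * 1 < (-c) * (-c)"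
    using \<open>c < -1\<close> by (intro mult_strict_mono) auto
  then have "1 < c\<^sup>2"
    by (simp add: power2_eq_square)
  then have K_pos: "\<forall>i<3. K i > 0"
    using masses by (simp add: K_def)
  have "\<forall>i<3. (\<Sum>j<3. K j * P j$1) = (b i - W) * P i$1"
    and "\<forall>i<3. (\<Sum>j<3. K j * P j$2) = (b i - W) * P i$2"
    using balance(1,2) by simp_all
  then have "\<forall>i<3. b i - W = 0"
    by (rule balanced_forces_vanish [OF equilateral_not_collinear [OF H2 products \<open>c < -1\<close>] K_pos])
  then have b_eq: "b i = W" if "i < 3" for i
    using that by simp
  have heights: "P i$3 = Z / W" if "i < 3" for i
    using balance(3) [OF that] b_eq [OF that] \<open>W > 0\<close> unfolding Z_def by simp
  have "(P i$1)\<^sup>2 + (P i$2)\<^sup>2 = (Z / W)\<^sup>2 - 1" if "i < 3" for i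
    using H2 [rule_format, OF that] heights [OF that] by (simp add: H2_def)
  then have K_eq: "(1 + c) * K i = W + c * (\<Sum>j<3. K j) + W * ((Z / W)\<^sup>2 - 1)" if "i < 3" for i
    using b_eq [OF that] that unfolding b_def by simp
  have "1 + c \<noteq> 0"
    using \<open>c < -1\<close> by simp
  moreover have "(1 + c) * K 0 = (1 + c) * K 1" "(1 + c) * K 1 = (1 + c) * K 2"
    using K_eq [of 0] K_eq [of 1] K_eq [of 2] by simp_all
  ultimately have "K 0 = K 1" "K 1 = K 2"
    by simp_all
  then show ?thesis
    using heights [of 0] heights [of 1] heights [of 2] \<open>1 < c\<^sup>2\<close> by (simp add: K_def)
qed

theorem mainTheorem15:
  fixes m :: "nat \<Rightarrow> real" and q :: "nat \<Rightarrow> real \<Rightarrow> real^3"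
    and \<omega> :: real and \<alpha> \<rho> :: "nat \<Rightarrow> real"
  assumes masses: "\<forall>i<3. m i > 0"
    and sol: "is_solution 3 m q"
    and RE: "elliptic_RE 3 q \<omega> \<alpha> \<rho>"
    and omega: "\<omega> \<noteq> 0"
    and rho: "\<forall>i<3. \<rho> i \<ge> 0"
    and equilateral: "\<forall>t. hdist (q 0 t) (q 1 t) = hdist (q 1 t) (q 2 t) \<and>
                           hdist (q 1 t) (q 2 t) = hdist (q 0 t) (q 2 t)"
  shows "(\<forall>t. (q 0 t)$3 = (q 1 t)$3 \<and> (q 1 t)$3 = (q 2 t)$3) \<and> m 0 = m 1 \<and> m 1 = m 2"
proof -
  obtain v where motion: "\<And>t. (\<forall>i<3. \<forall>j<3. i \<noteq> j \<longrightarrow> q i t \<noteq> q j t) \<and>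
      (\<forall>i<3. q i t \<in> H2 \<and> lorentz (q i t) (q i t) = -1 \<and> lorentz (q i t) (v i t) = 0 \<and>
         (q i has_vector_derivative v i t) (at t) \<and>
         (v i has_vector_derivative accel 3 m (\<lambda>k. q k t) (v i t) i) (at t))"
    using sol unfolding is_solution_def by blast
  have kinematics: "lorentz (v i t) (v i t) = \<omega>\<^sup>2 * ((q i t$1)\<^sup>2 + (q i t$2)\<^sup>2) \<and>
      accel 3 m (\<lambda>k. q k t) (v i t) i = vector [- \<omega>\<^sup>2 * q i t$1, - \<omega>\<^sup>2 * q i t$2, 0]"
    if "i < 3" for i t
    using circular_motion_kinematics [of "q i" "\<rho> i" \<omega> "\<alpha> i" "sqrt ((\<rho> i)\<^sup>2 + 1)" "v i"]
      RE motion that unfolding elliptic_RE_def by blast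
  have "q 0 t$3 = q 1 t$3 \<and> q 1 t$3 = q 2 t$3 \<and> m 0 = m 1 \<and> m 1 = m 2" for t
    using equilateral_relative_equilibrium_configuration [of m "\<omega>\<^sup>2" "\<lambda>k. q k t" "\<lambda>i. v i t"]
      masses omega motion kinematics equilateral by auto
  then show ?thesis
    by blast
qed

end
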